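(* Let $\alpha>0$, $t_0>0$, $x_0\in\mathcal H$, and let $x:[t_0,+\infty)\to\mathcal H$ be a solution of the Cauchy problem $$\tfrac{\alpha}{t}\dot x(t)+\operatorname{proj}_{C(x(t))+\ddot x(t)}(0)=0\ (t>t_0),\qquad x(t_0)=x_0,\ \dot x(t_0)=0 .$$ Then for all $i=1,\dots,m$ and all $t\in[t_0,+\infty)$ we have $f_i(x(t))\le f_i(x_0)$, i.e. $x(t)\in\{y\in\mathcal H:f_j(y)\le f_j(x_0)\ \forall j\}$ for all $t\ge t_0$.
   Context: $\mathcal H$ is a real Hilbert space. $f_1,\dots,f_m:\mathcal H\to\mathbb R$ are convex and continuously differentiable. $C(x)=\operatorname{co}\{\nabla f_i(x):i=1,\dots,m\}$. For a closed convex $K$, $\operatorname{proj}_K(y)=\arg\min_{w\in K}\|w-y\|^2$. A solution of the Cauchy problem is a function $x:[t_0,+\infty)\to\mathcal H$ such that: $x\in C^1([t_0,+\infty))$; $\dot x$ is absolutely continuous on $[t_0,T]$ for every $T\ge t_0$; there is a Bochner measurable $\ddot x$ with $\dot x(t)=\dot x(t_0)+\int_{t_0}^t\ddot x(s)\,ds$ for all $t$, and $\frac{d}{dt}\dot x=\ddot x$ a.e.; the equation holds for almost all $t\ge t_0$; and the initial conditions hold. *)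

theory Defs
  imports "HOL-Analysis.Analysis"
begin

definition abs_cont_on_ivl :: "(real \<Rightarrow> 'a::real_normed_vector) \<Rightarrow> real \<Rightarrow> real \<Rightarrow> bool" where
  "abs_cont_on_ivl f a b \<longleftrightarrow>
     (\<forall>\<epsilon>>0. \<exists>\<delta>>0. \<forall>(n::nat) (u::nat \<Rightarrow> real) (v::nat \<Rightarrow> real).
        (\<forall>k<n. a \<le> u k \<and> u k \<le> v k \<and> v k \<le> b) \<and>
        (\<forall>j<n. \<forall>k<n. j \<noteq> k \<longrightarrow> v j \<le> u k \<or> v k \<le> u j) \<and>
        (\<Sum>k<n. v k - u k) < \<delta>
        \<longrightarrow> (\<Sum>k<n. norm (f (v k) - f (u k))) < \<epsilon>)"

definition Cset :: "(nat \<Rightarrow> 'a \<Rightarrow> 'a::real_inner) \<Rightarrow> nat \<Rightarrow> 'a \<Rightarrow> 'a set" where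
  "Cset g m y = convex hull {g i y | i. i \<in> {1..m}}"

definition proj :: "'a::real_inner set \<Rightarrow> 'a \<Rightarrow> 'a" where
  "proj K y = (SOME w. w \<in> K \<and> (\<forall>v\<in>K. (norm (w - y))\<^sup>2 \<le> (norm (v - y))\<^sup>2))"

definition is_solution ::
  "(nat \<Rightarrow> 'a \<Rightarrow> 'a::{real_inner,complete_space}) \<Rightarrow> nat \<Rightarrow> real \<Rightarrow> real \<Rightarrow> 'a
   \<Rightarrow> (real \<Rightarrow> 'a) \<Rightarrow> (real \<Rightarrow> 'a) \<Rightarrow> (real \<Rightarrow> 'a) \<Rightarrow> bool" where
  "is_solution g m \<alpha> t0 x0 x xd xdd \<longleftrightarrow>
     \<comment> \<open>x \<in> C^1([t0,+\<infinity>)) with derivative xd\<close>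
     (\<forall>t\<ge>t0. (x has_vector_derivative xd t) (at t within {t0..})) \<and>
     continuous_on {t0..} xd \<and>
     \<comment> \<open>xd absolutely continuous on every [t0,T]\<close>
     (\<forall>T\<ge>t0. abs_cont_on_ivl xd t0 T) \<and>
     \<comment> \<open>xdd Bochner measurable, Bochner integrable on each [t0,t], xd(t) = xd(t0) + int xdd\<close>
     xdd measurable_on {t0..} \<and>
     (\<forall>t\<ge>t0. (\<lambda>s. norm (xdd s)) integrable_on {t0..t} \<and>
              (xdd has_integral (xd t - xd t0)) {t0..t}) \<and>
     \<comment> \<open>d/dt xd = xdd almost everywhere\<close>
     (\<exists>N. negligible N \<and> (\<forall>t. t > t0 \<and> t \<notin> N \<longrightarrow> (xd has_vector_derivative xdd t) (at t))) \<and>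
     \<comment> \<open>the equation holds for almost all t > t0\<close>
     (\<exists>N. negligible N \<and> (\<forall>t. t > t0 \<and> t \<notin> N \<longrightarrow>
        (\<alpha> / t) *\<^sub>R xd t + proj ((\<lambda>c. c + xdd t) ` Cset g m (x t)) 0 = 0)) \<and>
     \<comment> \<open>initial conditions\<close>
     x t0 = x0 \<and> xd t0 = 0"

end

theory Submission
  imports Defs
begin

(* Along a solution consider the energy E(t) = f_i(x(t)) + |x'(t)|^2 / 2.  It is absolutely
   continuous, and at almost every t its derivative is <x'(t), grad f_i(x(t)) + x''(t)>.  The
   equation says that -(alpha/t) x'(t) is the element of least norm of the convex set
   C(x(t)) + x''(t), which contains grad f_i(x(t)) + x''(t); the variational inequality of the
   projection therefore makes this derivative nonpositive.  An absolutely continuous function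
   whose derivative is almost everywhere nonpositive is nonincreasing (a gauge argument), so
   f_i(x(t)) <= E(t) <= E(t0) = f_i(x0). *)

hide_const (open) Polynomial.content

section \<open>Absolutely continuous functions on an interval\<close>

lemma abs_cont_on_ivlD:
  assumes "abs_cont_on_ivl f a b" "e > 0"
  obtains d where "d > 0"
    "\<And>(n::nat) u v. \<forall>k<n. a \<le> u k \<and> u k \<le> v k \<and> v k \<le> b \<Longrightarrow>
      \<forall>j<n. \<forall>k<n. j \<noteq> k \<longrightarrow> v j \<le> u k \<or> v k \<le> u j \<Longrightarrow>
      (\<Sum>k<n. v k - u k) < d \<Longrightarrow> (\<Sum>k<n. norm (f (v k) - f (u k))) < e"
proof -
  obtain d where "d > 0" and H: "\<forall>(n::nat) u v. (\<forall>k<n. a \<le> u k \<and> u k \<le> v k \<and> v k \<le> b) \<and>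
      (\<forall>j<n. \<forall>k<n. j \<noteq> k \<longrightarrow> v j \<le> u k \<or> v k \<le> u j) \<and> (\<Sum>k<n. v k - u k) < d \<longrightarrow>
      (\<Sum>k<n. norm (f (v k) - f (u k))) < e"
    using assms unfolding abs_cont_on_ivl_def by blast
  show thesis
    by (rule that[OF \<open>d > 0\<close>], rule H[rule_format], intro conjI)
qed

lemma abs_cont_on_ivl_dominated:
  fixes \<phi> :: "real \<Rightarrow> real" and \<psi> :: "real \<Rightarrow> 'a::real_normed_vector"
  assumes \<psi>: "abs_cont_on_ivl \<psi> a b" and "L \<ge> 0" "B \<ge> 0"
    and dom: "\<And>u v. a \<le> u \<Longrightarrow> u \<le> v \<Longrightarrow> v \<le> b \<Longrightarrow>
      \<bar>\<phi> v - \<phi> u\<bar> \<le> L * (v - u) + B * norm (\<psi> v - \<psi> u)"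
  shows "abs_cont_on_ivl \<phi> a b"
  unfolding abs_cont_on_ivl_def
proof (intro allI impI)
  fix \<epsilon> :: real
  assume "\<epsilon> > 0"
  have small: "c * y < \<epsilon> / 2" if "c \<ge> 0" "y < \<epsilon> / (2 * (c + 1))" for c y
  proof -
    have "c * y \<le> c * (\<epsilon> / (2 * (c + 1)))"
      using that by (intro mult_left_mono) auto
    also have "\<dots> < \<epsilon> / 2"
      using that \<open>\<epsilon> > 0\<close> by (simp add: field_simps)
    finally show ?thesis .
  qed
  have "\<epsilon> / (2 * (B + 1)) > 0"
    using \<open>\<epsilon> > 0\<close> \<open>B \<ge> 0\<close> by simp
  then obtain d where "d > 0" and d: "\<And>(n::nat) u v. \<forall>k<n. a \<le> u k \<and> u k \<le> v k \<and> v k \<le> b \<Longrightarrow>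
      \<forall>j<n. \<forall>k<n. j \<noteq> k \<longrightarrow> v j \<le> u k \<or> v k \<le> u j \<Longrightarrow>
      (\<Sum>k<n. v k - u k) < d \<Longrightarrow> (\<Sum>k<n. norm (\<psi> (v k) - \<psi> (u k))) < \<epsilon> / (2 * (B + 1))"
    using abs_cont_on_ivlD[OF \<psi>] by blast
  show "\<exists>\<delta>>0. \<forall>(n::nat) u v. (\<forall>k<n. a \<le> u k \<and> u k \<le> v k \<and> v k \<le> b) \<and>
      (\<forall>j<n. \<forall>k<n. j \<noteq> k \<longrightarrow> v j \<le> u k \<or> v k \<le> u j) \<and> (\<Sum>k<n. v k - u k) < \<delta> \<longrightarrow>
      (\<Sum>k<n. norm (\<phi> (v k) - \<phi> (u k))) < \<epsilon>"
  proof (intro exI[of _ "min d (\<epsilon> / (2 * (L + 1)))"] conjI allI impI)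
    show "min d (\<epsilon> / (2 * (L + 1))) > 0"
      using \<open>d > 0\<close> \<open>\<epsilon> > 0\<close> \<open>L \<ge> 0\<close> by simp
    fix n :: nat and u v :: "nat \<Rightarrow> real"
    assume H: "(\<forall>k<n. a \<le> u k \<and> u k \<le> v k \<and> v k \<le> b) \<and>
      (\<forall>j<n. \<forall>k<n. j \<noteq> k \<longrightarrow> v j \<le> u k \<or> v k \<le> u j) \<and>
      (\<Sum>k<n. v k - u k) < min d (\<epsilon> / (2 * (L + 1)))"
    have "(\<Sum>k<n. norm (\<phi> (v k) - \<phi> (u k)))
        \<le> (\<Sum>k<n. L * (v k - u k) + B * norm (\<psi> (v k) - \<psi> (u k)))"
      using H by (intro sum_mono) (auto intro: dom)
    also have "\<dots> = L * (\<Sum>k<n. v k - u k) + B * (\<Sum>k<n. norm (\<psi> (v k) - \<psi> (u k)))"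
      by (simp add: sum.distrib sum_distrib_left)
    also have "\<dots> < \<epsilon> / 2 + \<epsilon> / 2"
      using H d[of n u v] \<open>L \<ge> 0\<close> \<open>B \<ge> 0\<close> by (intro add_strict_mono small) auto
    finally show "(\<Sum>k<n. norm (\<phi> (v k) - \<phi> (u k))) < \<epsilon>"
      by simp
  qed
qed

lemma tagged_partial_division_of_real_ivlE:
  fixes K :: "real set"
  assumes "\<S> tagged_partial_division_of {a..b}" "(t, K) \<in> \<S>"
  obtains u v where "K = {u..v}" "a \<le> u" "u \<le> t" "t \<le> v" "v \<le> b"
proof -
  obtain u v where K: "K = {u..v}"
    using tagged_partial_division_ofD(4)[OF assms] box_real(2) by metis
  moreover have "t \<in> K" "K \<subseteq> {a..b}"
    using tagged_partial_division_ofD(2,3)[OF assms] by auto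
  ultimately show thesis
    using that[of u v] by auto
qed

lemma disjoint_open_intervals_real:
  fixes u v u' v' :: real
  assumes "u < v" "u' < v'" "{u<..<v} \<inter> {u'<..<v'} = {}"
  shows "v \<le> u' \<or> v' \<le> u"
proof (rule ccontr)
  assume "\<not> (v \<le> u' \<or> v' \<le> u)"
  then have "(max u u' + min v v') / 2 \<in> {u<..<v} \<inter> {u'<..<v'}"
    using assms(1,2) by auto
  with assms(3) show False by blast
qed

lemma tagged_partial_division_of_real_enumerate:
  assumes \<S>: "\<S> tagged_partial_division_of {a..b}" and nondegenerate: "\<And>t K. (t, K) \<in> \<S> \<Longrightarrow> content K \<noteq> 0"
  obtains n :: nat and u v :: "nat \<Rightarrow> real"
  where "\<And>k. k < n \<Longrightarrow> a \<le> u k \<and> u k < v k \<and> v k \<le> b"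
    "\<And>j k. j < n \<Longrightarrow> k < n \<Longrightarrow> j \<noteq> k \<Longrightarrow> v j \<le> u k \<or> v k \<le> u j"
    "\<And>g :: real set \<Rightarrow> 'a::comm_monoid_add. (\<Sum>(t, K)\<in>\<S>. g K) = (\<Sum>k<n. g {u k..v k})"
proof -
  obtain h where h: "bij_betw h {..<card \<S>} \<S>"
    using ex_bij_betw_nat_finite[OF tagged_partial_division_ofD(1)[OF \<S>]] lessThan_atLeast0 by metis
  define u where "u k = Inf (snd (h k))" for k
  define v where "v k = Sup (snd (h k))" for k
  have h_ivl: "snd (h k) = {u k..v k} \<and> a \<le> u k \<and> u k < v k \<and> v k \<le> b" if "k < card \<S>" for k
  proof -
    have "h k \<in> \<S>"
      using h that unfolding bij_betw_def by auto
    then obtain t K where hk: "h k = (t, K)" "(t, K) \<in> \<S>"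
      by (cases "h k") auto
    then obtain p q where pq: "K = {p..q}" "a \<le> p" "p \<le> q" "q \<le> b"
      using tagged_partial_division_of_real_ivlE[OF \<S>] by (metis order_trans)
    with nondegenerate[OF hk(2)] have "p < q"
      using content_real by fastforce
    with hk pq show ?thesis
      unfolding u_def v_def by auto
  qed
  show thesis
  proof (rule that[of "card \<S>" u v])
    show "a \<le> u k \<and> u k < v k \<and> v k \<le> b" if "k < card \<S>" for k
      using h_ivl[OF that] by blast
    show "v j \<le> u k \<or> v k \<le> u j" if "j < card \<S>" "k < card \<S>" "j \<noteq> k" for j k
    proof (rule disjoint_open_intervals_real)
      have "h j \<noteq> h k" "h j \<in> \<S>" "h k \<in> \<S>"
        using h that unfolding bij_betw_def inj_on_def by auto
      then have "interior (snd (h j)) \<inter> interior (snd (h k)) = {}"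
        using tagged_partial_division_ofD(5)[OF \<S>] by (metis prod.collapse)
      then show "{u j<..<v j} \<inter> {u k<..<v k} = {}"
        using h_ivl[OF that(1)] h_ivl[OF that(2)] by simp
    qed (use h_ivl that in auto)
    show "(\<Sum>(t, K)\<in>\<S>. g K) = (\<Sum>k<card \<S>. g {u k..v k})" for g :: "real set \<Rightarrow> 'a"
      using sum.reindex_bij_betw[OF h, of "\<lambda>(t, K). g K"] h_ivl by (simp add: split_beta)
  qed
qed

lemma abs_cont_on_ivl_tagged_partial_division:
  fixes f :: "real \<Rightarrow> 'a::real_normed_vector"
  assumes "abs_cont_on_ivl f a b" "e > 0"
  obtains d where "d > 0"
    "\<And>\<S>. \<S> tagged_partial_division_of {a..b} \<Longrightarrow> (\<Sum>(t, K)\<in>\<S>. content K) < d \<Longrightarrow>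
      (\<Sum>(t, K)\<in>\<S>. norm (f (Sup K) - f (Inf K))) < e"
proof -
  obtain d where "d > 0" and d: "\<And>(n::nat) u v. \<forall>k<n. a \<le> u k \<and> u k \<le> v k \<and> v k \<le> b \<Longrightarrow>
      \<forall>j<n. \<forall>k<n. j \<noteq> k \<longrightarrow> v j \<le> u k \<or> v k \<le> u j \<Longrightarrow>
      (\<Sum>k<n. v k - u k) < d \<Longrightarrow> (\<Sum>k<n. norm (f (v k) - f (u k))) < e"
    using abs_cont_on_ivlD[OF assms] by blast
  have "(\<Sum>(t, K)\<in>\<S>. norm (f (Sup K) - f (Inf K))) < e"
    if \<S>: "\<S> tagged_partial_division_of {a..b}" "(\<Sum>(t, K)\<in>\<S>. content K) < d" for \<S>
  proof -
    define \<P> where "\<P> = {(t, K)\<in>\<S>. content K \<noteq> 0}"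
    have \<P>: "\<P> tagged_partial_division_of {a..b}"
      unfolding \<P>_def by (rule tagged_partial_division_subset[OF \<S>(1)]) auto
    have sum_\<P>: "(\<Sum>(t, K)\<in>\<S>. g K) = (\<Sum>(t, K)\<in>\<P>. g K)"
      if "\<And>t K. (t, K) \<in> \<S> \<Longrightarrow> content K = 0 \<Longrightarrow> g K = 0" for g :: "real set \<Rightarrow> real"
      using that tagged_partial_division_ofD(1)[OF \<S>(1)] unfolding \<P>_def
      by (intro sum.mono_neutral_right) auto
    have "Sup K = Inf K" if "(t, K) \<in> \<S>" "content K = 0" for t K
      using tagged_partial_division_of_real_ivlE[OF \<S>(1) that(1)] that(2)
      by (metis content_real order_trans eq_iff_diff_eq_0 cSup_atLeastAtMost cInf_atLeastAtMost)
    then have "(\<Sum>(t, K)\<in>\<S>. norm (f (Sup K) - f (Inf K))) = (\<Sum>(t, K)\<in>\<P>. norm (f (Sup K) - f (Inf K)))"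
      by (intro sum_\<P>) simp
    moreover have "(\<Sum>(t, K)\<in>\<S>. content K) = (\<Sum>(t, K)\<in>\<P>. content K)"
      by (intro sum_\<P>) simp
    moreover obtain n :: nat and u v :: "nat \<Rightarrow> real"
      where "\<And>k. k < n \<Longrightarrow> a \<le> u k \<and> u k < v k \<and> v k \<le> b"
        "\<And>j k. j < n \<Longrightarrow> k < n \<Longrightarrow> j \<noteq> k \<Longrightarrow> v j \<le> u k \<or> v k \<le> u j"
        "\<And>g :: real set \<Rightarrow> real. (\<Sum>(t, K)\<in>\<P>. g K) = (\<Sum>k<n. g {u k..v k})"
      using tagged_partial_division_of_real_enumerate[OF \<P>, where 'a = real] unfolding \<P>_def by blast
    ultimately show ?thesis
      using d[of n u v] \<S>(2) by (auto simp: content_real less_imp_le)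
  qed
  with \<open>d > 0\<close> show thesis
    using that by blast
qed

lemma negligible_fine_tagged_content_less:
  fixes a b :: "'a::euclidean_space"
  assumes "negligible N" "\<delta> > 0"
  obtains \<gamma> where "gauge \<gamma>"
    "\<And>\<D>. \<D> tagged_division_of cbox a b \<Longrightarrow> \<gamma> fine \<D> \<Longrightarrow>
      (\<Sum>(t, K)\<in>\<D>. content K * indicator N t) < \<delta>"
proof -
  have "(indicat_real N has_integral 0) (cbox a b)"
    using assms(1) unfolding negligible_def by blast
  then obtain \<gamma> where "gauge \<gamma>" and \<gamma>: "\<And>\<D>. \<D> tagged_division_of cbox a b \<Longrightarrow> \<gamma> fine \<D> \<Longrightarrow>
      norm ((\<Sum>(t, K)\<in>\<D>. content K *\<^sub>R indicat_real N t) - 0) < \<delta>"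
    using assms(2) unfolding has_integral by meson
  show thesis
  proof (rule that[OF \<open>gauge \<gamma>\<close>])
    fix \<D> assume "\<D> tagged_division_of cbox a b" "\<gamma> fine \<D>"
    from \<gamma>[OF this] show "(\<Sum>(t, K)\<in>\<D>. content K * indicator N t) < \<delta>"
      by (simp add: split_beta)
  qed
qed

lemma abs_cont_on_ivl_negligible_tags_gauge:
  fixes f :: "real \<Rightarrow> 'a::real_normed_vector"
  assumes "abs_cont_on_ivl f a b" "negligible N" "\<epsilon> > 0"
  obtains \<gamma> where "gauge \<gamma>"
    "\<And>\<D>. \<D> tagged_division_of {a..b} \<Longrightarrow> \<gamma> fine \<D> \<Longrightarrow>
      (\<Sum>(t, K)\<in>{(t, K)\<in>\<D>. t \<in> N}. norm (f (Sup K) - f (Inf K))) < \<epsilon>"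
proof -
  obtain \<delta> where "\<delta> > 0" and ac: "\<And>\<S>. \<S> tagged_partial_division_of {a..b} \<Longrightarrow>
      (\<Sum>(t, K)\<in>\<S>. content K) < \<delta> \<Longrightarrow> (\<Sum>(t, K)\<in>\<S>. norm (f (Sup K) - f (Inf K))) < \<epsilon>"
    using abs_cont_on_ivl_tagged_partial_division[OF assms(1,3)] by blast
  obtain \<gamma> where "gauge \<gamma>" and \<gamma>: "\<And>\<D>. \<D> tagged_division_of cbox a b \<Longrightarrow> \<gamma> fine \<D> \<Longrightarrow>
      (\<Sum>(t, K)\<in>\<D>. content K * indicator N t) < \<delta>"
    using negligible_fine_tagged_content_less[OF \<open>negligible N\<close> \<open>\<delta> > 0\<close>] by blast
  show thesis
  proof (rule that[OF \<open>gauge \<gamma>\<close>])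
    fix \<D>
    assume \<D>: "\<D> tagged_division_of {a..b}" and "\<gamma> fine \<D>"
    then have \<D>': "\<D> tagged_partial_division_of {a..b}" and "finite \<D>"
      unfolding tagged_division_of_def tagged_partial_division_of_def by blast+
    have "(\<Sum>(t, K)\<in>{(t, K)\<in>\<D>. t \<in> N}. content K) = (\<Sum>(t, K)\<in>\<D>. content K * indicator N t)"
      using \<open>finite \<D>\<close> by (auto simp: indicator_def split_beta intro: sum.mono_neutral_cong_left)
    also have "\<dots> < \<delta>"
      using \<gamma> \<D> \<open>\<gamma> fine \<D>\<close> by simp
    finally show "(\<Sum>(t, K)\<in>{(t, K)\<in>\<D>. t \<in> N}. norm (f (Sup K) - f (Inf K))) < \<epsilon>"
      by (intro ac tagged_partial_division_subset[OF \<D>']) auto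
  qed
qed

lemma nonpos_derivative_gauge:
  fixes \<phi> :: "real \<Rightarrow> real"
  assumes "\<epsilon> > 0" and der: "\<And>t. t \<in> S \<Longrightarrow> \<exists>D\<le>0. (\<phi> has_real_derivative D) (at t)"
  obtains \<gamma> where "gauge \<gamma>"
    "\<And>t u v. t \<in> S \<Longrightarrow> u \<le> t \<Longrightarrow> t \<le> v \<Longrightarrow> {u..v} \<subseteq> \<gamma> t \<Longrightarrow> \<phi> v - \<phi> u \<le> \<epsilon> * (v - u)"
proof -
  have "\<exists>r>0. \<forall>u v. u \<le> t \<longrightarrow> t \<le> v \<longrightarrow> {u..v} \<subseteq> ball t r \<longrightarrow> \<phi> v - \<phi> u \<le> \<epsilon> * (v - u)"
    if t: "t \<in> S" for t
  proof -
    obtain D where "D \<le> 0" and "(\<phi> has_real_derivative D) (at t)"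
      using der[OF t] by blast
    then obtain r where "r > 0"
      and r: "\<And>y. \<bar>y - t\<bar> < r \<Longrightarrow> \<bar>\<phi> y - \<phi> t - D * (y - t)\<bar> \<le> \<epsilon> * \<bar>y - t\<bar>"
      using \<open>\<epsilon> > 0\<close> unfolding has_field_derivative_def has_derivative_at_alt by force
    have "\<phi> v - \<phi> u \<le> \<epsilon> * (v - u)" if "u \<le> t" "t \<le> v" "{u..v} \<subseteq> ball t r" for u v
    proof -
      have "u \<in> {u..v}" "v \<in> {u..v}"
        using that(1,2) by auto
      with that(3) have "u \<in> ball t r" "v \<in> ball t r"
        by blast+
      then have "\<bar>u - t\<bar> < r" "\<bar>v - t\<bar> < r"
        by (auto simp: dist_real_def abs_minus_commute)
      moreover have "D * (u - t) \<ge> 0" "D * (v - t) \<le> 0"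
        using \<open>D \<le> 0\<close> that(1,2) by (auto simp: mult_nonpos_nonpos mult_nonpos_nonneg)
      ultimately show ?thesis
        using r[of u] r[of v] that(1,2) by (auto simp: abs_if algebra_simps split: if_splits)
    qed
    with \<open>r > 0\<close> show ?thesis
      by blast
  qed
  then obtain r where r: "\<And>t. t \<in> S \<Longrightarrow> r t > 0 \<and> (\<forall>u v. u \<le> t \<longrightarrow> t \<le> v \<longrightarrow>
      {u..v} \<subseteq> ball t (r t) \<longrightarrow> \<phi> v - \<phi> u \<le> \<epsilon> * (v - u))"
    by metis
  show thesis
  proof (rule that)
    show "gauge (\<lambda>t. ball t (if t \<in> S then r t else 1))"
      using r by (intro gauge_ball_dependent) simp
  qed (use r in auto)
qed

(* Split a fine tagged division by its tags: off N the derivative bounds each increment by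
   eps times the length, and the increments over intervals tagged in N add up to less than eps. *)
lemma abs_cont_on_ivl_nonpos_derivative_increment:
  fixes \<phi> :: "real \<Rightarrow> real"
  assumes "a \<le> b" "abs_cont_on_ivl \<phi> a b" "negligible N" "\<epsilon> > 0"
    and der: "\<And>t. t \<in> {a<..<b} \<Longrightarrow> t \<notin> N \<Longrightarrow> \<exists>D\<le>0. (\<phi> has_real_derivative D) (at t)"
  shows "\<phi> b - \<phi> a \<le> \<epsilon> * (b - a) + \<epsilon>"
proof -
  define N' where "N' = N \<union> {a, b}"
  have "negligible N'"
    using \<open>negligible N\<close> unfolding N'_def by simp
  obtain \<gamma>\<^sub>1 where "gauge \<gamma>\<^sub>1" and \<gamma>\<^sub>1: "\<And>\<D>. \<D> tagged_division_of {a..b} \<Longrightarrow> \<gamma>\<^sub>1 fine \<D> \<Longrightarrow>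
      (\<Sum>(t, K)\<in>{(t, K)\<in>\<D>. t \<in> N'}. norm (\<phi> (Sup K) - \<phi> (Inf K))) < \<epsilon>"
    using abs_cont_on_ivl_negligible_tags_gauge[OF assms(2) \<open>negligible N'\<close> \<open>\<epsilon> > 0\<close>] by blast
  obtain \<gamma>\<^sub>2 where "gauge \<gamma>\<^sub>2" and \<gamma>\<^sub>2: "\<And>t u v. t \<in> {a<..<b} - N \<Longrightarrow> u \<le> t \<Longrightarrow> t \<le> v \<Longrightarrow>
      {u..v} \<subseteq> \<gamma>\<^sub>2 t \<Longrightarrow> \<phi> v - \<phi> u \<le> \<epsilon> * (v - u)"
    using nonpos_derivative_gauge[OF \<open>\<epsilon> > 0\<close>, of "{a<..<b} - N" \<phi>] der by (metis Diff_iff)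
  obtain \<D> where "\<D> tagged_division_of cbox a b" and "(\<lambda>t. \<gamma>\<^sub>1 t \<inter> \<gamma>\<^sub>2 t) fine \<D>"
    using fine_division_exists[OF gauge_Int[OF \<open>gauge \<gamma>\<^sub>1\<close> \<open>gauge \<gamma>\<^sub>2\<close>]] by blast
  then have \<D>: "\<D> tagged_division_of {a..b}" and "\<gamma>\<^sub>1 fine \<D>" "\<gamma>\<^sub>2 fine \<D>"
    unfolding fine_Int by simp_all
  then have "finite \<D>"
    by blast
  define \<B> where "\<B> = {(t, K)\<in>\<D>. t \<in> N'}"
  have good: "\<phi> (Sup K) - \<phi> (Inf K) \<le> \<epsilon> * content K" if tK: "(t, K) \<in> \<D> - \<B>" for t K
  proof -
    obtain u v where K: "K = {u..v}" "a \<le> u" "u \<le> t" "t \<le> v" "v \<le> b"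
      using tagged_partial_division_of_real_ivlE \<D> tK unfolding tagged_division_of_def by blast
    have "t \<in> {a<..<b} - N"
      using tK K unfolding \<B>_def N'_def by auto
    moreover have "K \<subseteq> \<gamma>\<^sub>2 t"
      using \<open>\<gamma>\<^sub>2 fine \<D>\<close> tK unfolding fine_def by blast
    ultimately show ?thesis
      using \<gamma>\<^sub>2[of t u v] K by (simp add: content_real)
  qed
  have "\<phi> b - \<phi> a = (\<Sum>(t, K)\<in>\<D>. \<phi> (Sup K) - \<phi> (Inf K))"
    using additive_tagged_division_1[OF \<open>a \<le> b\<close> \<D>, of \<phi>] by simp
  also have "\<dots> = (\<Sum>(t, K)\<in>\<D> - \<B>. \<phi> (Sup K) - \<phi> (Inf K)) + (\<Sum>(t, K)\<in>\<B>. \<phi> (Sup K) - \<phi> (Inf K))"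
    using \<open>finite \<D>\<close> by (intro sum.subset_diff) (auto simp: \<B>_def)
  also have "\<dots> \<le> (\<Sum>(t, K)\<in>\<D>. \<epsilon> * content K) + (\<Sum>(t, K)\<in>\<B>. norm (\<phi> (Sup K) - \<phi> (Inf K)))"
  proof (rule add_mono)
    have "(\<Sum>(t, K)\<in>\<D> - \<B>. \<phi> (Sup K) - \<phi> (Inf K)) \<le> (\<Sum>(t, K)\<in>\<D> - \<B>. \<epsilon> * content K)"
      using good by (intro sum_mono) auto
    also have "\<dots> \<le> (\<Sum>(t, K)\<in>\<D>. \<epsilon> * content K)"
      using \<open>finite \<D>\<close> \<open>\<epsilon> > 0\<close> by (intro sum_mono2) auto
    finally show "(\<Sum>(t, K)\<in>\<D> - \<B>. \<phi> (Sup K) - \<phi> (Inf K)) \<le> (\<Sum>(t, K)\<in>\<D>. \<epsilon> * content K)" .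
  qed (intro sum_mono, auto)
  also have "\<dots> \<le> \<epsilon> * (b - a) + \<epsilon>"
    using additive_content_tagged_division[of \<D> a b] \<D> \<open>a \<le> b\<close> \<gamma>\<^sub>1[OF \<D> \<open>\<gamma>\<^sub>1 fine \<D>\<close>]
    by (simp add: sum_distrib_left[symmetric] split_beta \<B>_def)
  finally show ?thesis .
qed

lemma abs_cont_on_ivl_nonpos_derivative_imp_le:
  fixes \<phi> :: "real \<Rightarrow> real"
  assumes "a \<le> b" "abs_cont_on_ivl \<phi> a b" "negligible N"
    and "\<And>t. t \<in> {a<..<b} \<Longrightarrow> t \<notin> N \<Longrightarrow> \<exists>D\<le>0. (\<phi> has_real_derivative D) (at t)"
  shows "\<phi> b \<le> \<phi> a"
proof (rule field_le_epsilon)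
  fix e :: real
  assume "e > 0"
  with \<open>a \<le> b\<close> have "e / (b - a + 1) > 0"
    by simp
  then have "\<phi> b - \<phi> a \<le> e / (b - a + 1) * (b - a) + e / (b - a + 1)"
    by (rule abs_cont_on_ivl_nonpos_derivative_increment[OF assms(1-3) _ assms(4)])
  also have "\<dots> = e / (b - a + 1) * (b - a + 1)"
    by (simp only: distrib_left mult_1_right)
  also have "\<dots> = e"
    using \<open>a \<le> b\<close> by simp
  finally show "\<phi> b \<le> \<phi> a + e"
    by simp
qed

section \<open>Projection onto the shifted convex hull of the gradients\<close>

lemma compact_Cset: "compact (Cset g m y)"
  unfolding Cset_def by (rule finite_imp_compact_convex_hull) simp

lemma convex_Cset: "convex (Cset g m y)"
  unfolding Cset_def by (rule convex_convex_hull)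

lemma gradient_in_Cset: "i \<in> {1..m} \<Longrightarrow> g i y \<in> Cset g m y"
  unfolding Cset_def by (rule hull_inc) blast

lemma proj_zero_min_norm:
  fixes K :: "'a::real_inner set"
  assumes "compact K" "K \<noteq> {}"
  shows "proj K 0 \<in> K" and "\<And>v. v \<in> K \<Longrightarrow> norm (proj K 0) \<le> norm v"
proof -
  obtain w where "w \<in> K" "\<forall>v\<in>K. norm w \<le> norm v"
    using continuous_attains_inf[OF assms continuous_on_norm_id] by blast
  then have "\<exists>w. w \<in> K \<and> (\<forall>v\<in>K. (norm (w - 0))\<^sup>2 \<le> (norm (v - 0))\<^sup>2)"
    by (auto intro: power_mono)
  then have "proj K 0 \<in> K \<and> (\<forall>v\<in>K. (norm (proj K 0 - 0))\<^sup>2 \<le> (norm (v - 0))\<^sup>2)"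
    unfolding proj_def by (rule someI_ex)
  then show "proj K 0 \<in> K" "\<And>v. v \<in> K \<Longrightarrow> norm (proj K 0) \<le> norm v"
    by (auto intro: power2_le_imp_le)
qed

lemma proj_zero_inner_le:
  fixes K :: "'a::real_inner set"
  assumes "compact K" "convex K" "v \<in> K"
  shows "proj K 0 \<bullet> proj K 0 \<le> proj K 0 \<bullet> v"
proof -
  have "proj K 0 \<in> K" "\<forall>z\<in>K. dist 0 (proj K 0) \<le> dist 0 z"
    using proj_zero_min_norm[OF assms(1)] assms(3) by auto
  then have "(0 - proj K 0) \<bullet> (v - proj K 0) \<le> 0"
    using any_closest_point_dot[OF assms(2) compact_imp_closed[OF assms(1)] _ assms(3)] by blast
  then show ?thesis
    by (simp add: inner_diff_right)
qed

lemma proj_shifted_Cset_inner_nonpos: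
  fixes w z y :: "'a::real_inner"
  assumes "c > 0" "c *\<^sub>R w + proj ((\<lambda>v. v + z) ` Cset g m y) 0 = 0" "i \<in> {1..m}"
  shows "w \<bullet> (g i y + z) \<le> 0"
proof -
  define K where "K = (\<lambda>v. v + z) ` Cset g m y"
  have K: "K = (+) z ` Cset g m y"
    unfolding K_def by (simp add: add.commute)
  have "g i y + z \<in> K"
    unfolding K_def using gradient_in_Cset[OF assms(3)] by blast
  then have "proj K 0 \<bullet> proj K 0 \<le> proj K 0 \<bullet> (g i y + z)"
    using compact_translation[OF compact_Cset] convex_translation[OF convex_Cset]
    unfolding K by (intro proj_zero_inner_le)
  moreover have "proj K 0 = - (c *\<^sub>R w)"
    using assms(2) unfolding K_def by (simp add: eq_neg_iff_add_eq_0 add.commute)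
  ultimately have "c * (w \<bullet> (g i y + z)) \<le> - (c * c * (w \<bullet> w))"
    by (simp add: algebra_simps)
  also have "\<dots> \<le> 0"
    using \<open>c > 0\<close> by simp
  finally show ?thesis
    using \<open>c > 0\<close> by (simp add: mult_le_0_iff)
qed

section \<open>The energy along a solution\<close>

lemma has_real_derivative_gradient_comp:
  fixes F :: "'a::real_inner \<Rightarrow> real"
  assumes "(F has_derivative (\<lambda>h. G \<bullet> h)) (at (x t))" "(x has_vector_derivative v) (at t within S)"
  shows "((\<lambda>s. F (x s)) has_real_derivative G \<bullet> v) (at t within S)"
proof -
  have "(x has_derivative (\<lambda>s. s *\<^sub>R v)) (at t within S)"
    using assms(2) by (simp add: has_vector_derivative_def)
  from diff_chain_within[OF this has_derivative_at_withinI[OF assms(1)]]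
  have "((\<lambda>s. F (x s)) has_derivative (\<lambda>s. s * (G \<bullet> v))) (at t within S)"
    by (simp add: o_def)
  moreover have "(\<lambda>s. s * (G \<bullet> v)) = (*) (G \<bullet> v)"
    by (simp add: fun_eq_iff)
  ultimately show ?thesis
    unfolding has_field_derivative_def by simp
qed

lemma energy_has_real_derivative:
  fixes F :: "'a::real_inner \<Rightarrow> real"
  assumes "(F has_derivative (\<lambda>h. G \<bullet> h)) (at (x t))"
    and "(x has_vector_derivative xd t) (at t)" "(xd has_vector_derivative xdd) (at t)"
  shows "((\<lambda>s. F (x s) + (norm (xd s))\<^sup>2 / 2) has_real_derivative xd t \<bullet> (G + xdd)) (at t)"
proof -
  have "((\<lambda>s. (xd s \<bullet> xd s) / 2) has_real_derivative xd t \<bullet> xdd) (at t)"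
    using assms(3) unfolding has_vector_derivative_def has_field_derivative_def
    by (auto intro!: derivative_eq_intros simp: inner_commute algebra_simps)
  from has_real_derivative_gradient_comp[OF assms(1,2)] DERIV_add[OF _ this]
  show ?thesis
    by (simp add: power2_norm_eq_inner inner_add_right inner_commute)
qed

lemma abs_norm_power2_diff_le:
  fixes p q :: "'a::real_normed_vector"
  assumes "norm p \<le> B" "norm q \<le> B"
  shows "\<bar>(norm p)\<^sup>2 - (norm q)\<^sup>2\<bar> \<le> 2 * B * norm (p - q)"
proof -
  have "\<bar>(norm p)\<^sup>2 - (norm q)\<^sup>2\<bar> = \<bar>norm p - norm q\<bar> * (norm p + norm q)"
    by (simp add: power2_eq_square abs_mult square_diff_square_factored)
  also have "\<dots> \<le> norm (p - q) * (2 * B)"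
    using assms by (intro mult_mono norm_triangle_ineq3) auto
  finally show ?thesis
    by (simp add: algebra_simps)
qed

lemma energy_abs_cont_on_ivl:
  fixes F :: "'a::real_inner \<Rightarrow> real" and x xd :: "real \<Rightarrow> 'a"
  assumes F: "\<And>y. (F has_derivative (\<lambda>h. G y \<bullet> h)) (at y)" and G: "continuous_on UNIV G"
    and x: "\<And>t. t \<in> {a..b} \<Longrightarrow> (x has_vector_derivative xd t) (at t within {a..b})"
    and xd: "continuous_on {a..b} xd" "abs_cont_on_ivl xd a b"
  shows "abs_cont_on_ivl (\<lambda>t. F (x t) + (norm (xd t))\<^sup>2 / 2) a b"
proof -
  have "continuous_on {a..b} x"
    using x has_vector_derivative_continuous continuous_on_eq_continuous_within by blast
  then have "continuous_on {a..b} (\<lambda>t. G (x t) \<bullet> xd t)"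
    using continuous_on_compose2[OF G] xd(1) by (intro continuous_intros) auto
  then have "bounded ((\<lambda>t. G (x t) \<bullet> xd t) ` {a..b})"
    by (intro compact_imp_bounded compact_continuous_image compact_Icc)
  then obtain L where "L > 0" and L: "\<And>t. t \<in> {a..b} \<Longrightarrow> \<bar>G (x t) \<bullet> xd t\<bar> \<le> L"
    unfolding bounded_pos by auto
  have "bounded (xd ` {a..b})"
    by (intro compact_imp_bounded compact_continuous_image compact_Icc xd(1))
  then obtain B where "B > 0" and B: "\<And>t. t \<in> {a..b} \<Longrightarrow> norm (xd t) \<le> B"
    unfolding bounded_pos by auto
  show ?thesis
  proof (rule abs_cont_on_ivl_dominated[OF xd(2)])
    fix u v
    assume uv: "a \<le> u" "u \<le> v" "v \<le> b"
    have "\<exists>\<xi>\<in>{u..v}. F (x v) - F (x u) = (G (x \<xi>) \<bullet> xd \<xi>) * (v - u)"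
    proof (rule mvt_very_simple[OF \<open>u \<le> v\<close>])
      fix t
      assume "u \<le> t" "t \<le> v"
      with uv have "(x has_vector_derivative xd t) (at t within {u..v})"
        by (intro has_vector_derivative_within_subset[OF x]) auto
      from has_real_derivative_gradient_comp[OF F this]
      show "((\<lambda>s. F (x s)) has_derivative (*) (G (x t) \<bullet> xd t)) (at t within {u..v})"
        by (simp add: has_field_derivative_def)
    qed
    then have "\<bar>F (x v) - F (x u)\<bar> \<le> L * (v - u)"
      using L uv \<open>L > 0\<close> by (auto simp: abs_mult intro!: mult_mono)
    moreover have "\<bar>(norm (xd v))\<^sup>2 / 2 - (norm (xd u))\<^sup>2 / 2\<bar> \<le> B * norm (xd v - xd u)"
      using abs_norm_power2_diff_le[OF B B, of v u] uv by simp
    ultimately show "\<bar>(F (x v) + (norm (xd v))\<^sup>2 / 2) - (F (x u) + (norm (xd u))\<^sup>2 / 2)\<bar>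
        \<le> L * (v - u) + B * norm (xd v - xd u)"
      by linarith
  qed (use \<open>L > 0\<close> \<open>B > 0\<close> in auto)
qed

lemma is_solution_energy_abs_cont:
  fixes F :: "'a::{real_inner,complete_space} \<Rightarrow> real"
  assumes "\<And>y. (F has_derivative (\<lambda>h. G y \<bullet> h)) (at y)" "continuous_on UNIV G"
    and sol: "is_solution g m \<alpha> t0 x0 x xd xdd" and "t0 \<le> T"
  shows "abs_cont_on_ivl (\<lambda>t. F (x t) + (norm (xd t))\<^sup>2 / 2) t0 T"
proof (rule energy_abs_cont_on_ivl[OF assms(1,2)])
  have x': "\<And>t. t \<ge> t0 \<Longrightarrow> (x has_vector_derivative xd t) (at t within {t0..})"
    and "continuous_on {t0..} xd"
    using sol unfolding is_solution_def by auto
  then show "continuous_on {t0..T} xd"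
    "\<And>t. t \<in> {t0..T} \<Longrightarrow> (x has_vector_derivative xd t) (at t within {t0..T})"
    by (auto intro: continuous_on_subset has_vector_derivative_within_subset[OF x'])
  show "abs_cont_on_ivl xd t0 T"
    using sol \<open>t0 \<le> T\<close> unfolding is_solution_def by blast
qed

lemma is_solution_energy_derivative_nonpos:
  fixes f :: "'a::{real_inner,complete_space} \<Rightarrow> real"
  assumes "\<And>y. (f has_derivative (\<lambda>h. g i y \<bullet> h)) (at y)" "i \<in> {1..m}"
    and "\<alpha> > 0" "t0 > 0" and sol: "is_solution g m \<alpha> t0 x0 x xd xdd"
  obtains N where "negligible N"
    "\<And>t. t > t0 \<Longrightarrow> t \<notin> N \<Longrightarrow> \<exists>D\<le>0. ((\<lambda>s. f (x s) + (norm (xd s))\<^sup>2 / 2) has_real_derivative D) (at t)"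
proof -
  obtain N\<^sub>1 N\<^sub>2 where "negligible N\<^sub>1" "negligible N\<^sub>2"
    and xd': "\<And>t. t > t0 \<Longrightarrow> t \<notin> N\<^sub>1 \<Longrightarrow> (xd has_vector_derivative xdd t) (at t)"
    and eq: "\<And>t. t > t0 \<Longrightarrow> t \<notin> N\<^sub>2 \<Longrightarrow>
      (\<alpha> / t) *\<^sub>R xd t + proj ((\<lambda>c. c + xdd t) ` Cset g m (x t)) 0 = 0"
    using sol unfolding is_solution_def by metis
  have x': "\<And>t. t \<ge> t0 \<Longrightarrow> (x has_vector_derivative xd t) (at t within {t0..})"
    using sol unfolding is_solution_def by blast
  have "\<exists>D\<le>0. ((\<lambda>s. f (x s) + (norm (xd s))\<^sup>2 / 2) has_real_derivative D) (at t)"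
    if t: "t > t0" "t \<notin> N\<^sub>1 \<union> N\<^sub>2" for t
  proof -
    have "(x has_vector_derivative xd t) (at t within {t0<..})"
      using t by (intro has_vector_derivative_within_subset[OF x']) auto
    then have "(x has_vector_derivative xd t) (at t)"
      using t at_within_open[of t "{t0<..}"] by simp
    then have "((\<lambda>s. f (x s) + (norm (xd s))\<^sup>2 / 2) has_real_derivative xd t \<bullet> (g i (x t) + xdd t)) (at t)"
      using t by (intro energy_has_real_derivative assms(1) xd') auto
    moreover have "xd t \<bullet> (g i (x t) + xdd t) \<le> 0"
      using t \<open>\<alpha> > 0\<close> \<open>t0 > 0\<close> by (intro proj_shifted_Cset_inner_nonpos[OF _ eq assms(2)]) auto
    ultimately show ?thesis
      by blast
  qed
  with negligible_Un[OF \<open>negligible N\<^sub>1\<close> \<open>negligible N\<^sub>2\<close>] show thesis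
    using that by blast
qed

theorem corollary4p2:
  fixes f :: "nat \<Rightarrow> 'a::{real_inner,complete_space} \<Rightarrow> real"
    and g :: "nat \<Rightarrow> 'a \<Rightarrow> 'a"
    and m :: nat and \<alpha> t0 :: real and x0 :: 'a
    and x xd xdd :: "real \<Rightarrow> 'a"
  assumes conv: "\<And>i. i \<in> {1..m} \<Longrightarrow> convex_on UNIV (f i)"
    and grad: "\<And>i y. i \<in> {1..m} \<Longrightarrow> (f i has_derivative (\<lambda>h. g i y \<bullet> h)) (at y)"
    and grad_cont: "\<And>i. i \<in> {1..m} \<Longrightarrow> continuous_on UNIV (g i)"
    and "\<alpha> > 0" and "t0 > 0"
    and sol: "is_solution g m \<alpha> t0 x0 x xd xdd"
  shows "\<forall>i\<in>{1..m}. \<forall>t\<ge>t0. f i (x t) \<le> f i x0"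
proof (intro ballI allI impI)
  fix i T
  assume i: "i \<in> {1..m}" and "t0 \<le> T"
  define E where "E = (\<lambda>t. f i (x t) + (norm (xd t))\<^sup>2 / 2)"
  obtain N where "negligible N"
    and E': "\<And>t. t > t0 \<Longrightarrow> t \<notin> N \<Longrightarrow> \<exists>D\<le>0. (E has_real_derivative D) (at t)"
    using is_solution_energy_derivative_nonpos[OF grad[OF i] i \<open>\<alpha> > 0\<close> \<open>t0 > 0\<close> sol]
    unfolding E_def by blast
  have "abs_cont_on_ivl E t0 T"
    unfolding E_def by (rule is_solution_energy_abs_cont[OF grad[OF i] grad_cont[OF i] sol \<open>t0 \<le> T\<close>])
  have "f i (x T) \<le> E T"
    unfolding E_def by simp
  also have "E T \<le> E t0"
    using \<open>t0 \<le> T\<close> \<open>abs_cont_on_ivl E t0 T\<close> \<open>negligible N\<close>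
    by (rule abs_cont_on_ivl_nonpos_derivative_imp_le) (use E' in auto)
  also have "E t0 = f i x0"
    using sol unfolding E_def is_solution_def by simp
  finally show "f i (x T) \<le> f i x0" .
qed

end
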